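(* For every integer $n\ge5$, the coefficient of the monomial $T_nT_{n-1}T_3$ in $R_{n+1}$ is $c^{(n+1)}_{n,n-1,3}=-(n-1)n(n+1)$.
   Context: Let $T_1,T_2,\dots$ be indeterminates, $T_\alpha=T_{\alpha_1}\cdots T_{\alpha_d}$. Define linear operators $L,H$ on monomials (constants sent to $0$): $L(T_{\alpha_1}\cdots T_{\alpha_r})=\sum_{1\le i<j\le r}T_{\alpha_1}\cdots T_{\alpha_i+1}\cdots T_{\alpha_j+1}\cdots T_{\alpha_r}$, $H(T_{\alpha_1}\cdots T_{\alpha_r})=-\frac12\sum_{k=1}^{r}\sum_{l=1}^{\alpha_k-1}\binom{\alpha_k}{l}T_{1+l}T_{1+\alpha_k-l}\prod_{i\ne k}T_{\alpha_i}$. For $n\ge2$ let $A_n=-\sum_{k=1}^{n-1}\binom{n}{k}T_{1+k}T_{1+n-k}T_n$; set $R_2=0$, $R_{n+1}=A_n+L(R_n)+H(R_n)$. $c^{(n)}_\alpha$ is the coefficient of the monomial $T_\alpha$ in $R_n$. *)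

theory Defs
  imports Complex_Main "HOL-Library.Multiset"
begin

(* A monomial T_{a1}...T_{ar} in the commuting indeterminates T_1,T_2,... is the
   multiset {#a1,...,ar#}; a polynomial is its coefficient function (rational
   coefficients). *)
type_synonym mono = "nat multiset"
type_synonym tpoly = "mono \<Rightarrow> rat"

definition single :: "mono \<Rightarrow> tpoly" where
  "single u = (\<lambda>m. if m = u then 1 else 0)"

definition linext :: "(mono \<Rightarrow> tpoly) \<Rightarrow> tpoly \<Rightarrow> tpoly" where
  "linext f p = (\<lambda>m. \<Sum>u\<in>{u. p u \<noteq> 0}. p u * f u m)"

definition Llist :: "nat list \<Rightarrow> tpoly" where
  "Llist xs = (\<lambda>m. \<Sum>j<length xs. \<Sum>i<j.
      single (mset (xs[i := xs!i + 1, j := xs!j + 1])) m)"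

definition Hlist :: "nat list \<Rightarrow> tpoly" where
  "Hlist xs = (\<lambda>m. - (1/2) * (\<Sum>k<length xs. \<Sum>l\<in>{1..<xs!k}.
      of_nat (xs!k choose l) *
      single (mset ((1 + l) # (1 + xs!k - l) # (take k xs @ drop (Suc k) xs))) m))"

definition Lop :: "tpoly \<Rightarrow> tpoly" where
  "Lop = linext (\<lambda>u. Llist (sorted_list_of_multiset u))"

definition Hop :: "tpoly \<Rightarrow> tpoly" where
  "Hop = linext (\<lambda>u. Hlist (sorted_list_of_multiset u))"

definition Apoly :: "nat \<Rightarrow> tpoly" where
  "Apoly n = (\<lambda>m. - (\<Sum>k\<in>{1..n-1}.
      of_nat (n choose k) * single {#1 + k, 1 + n - k, n#} m))"

(* R_2 = 0, R_{n+1} = A_n + L(R_n) + H(R_n) for n >= 2; R_0, R_1 are irrelevant (set to 0) *)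
primrec R :: "nat \<Rightarrow> tpoly" where
  "R 0 = (\<lambda>_. 0)"
| "R (Suc n) = (if n < 2 then (\<lambda>_. 0)
     else (\<lambda>m. Apoly n m + Lop (R n) m + Hop (R n) m))"

definition coef :: "nat \<Rightarrow> mono \<Rightarrow> rat" where
  "coef n \<alpha> = R n \<alpha>"

end

theory Submission
  imports Defs
begin

text \<open>Every monomial occurring in some \<open>R\<^sub>k\<close> has degree at least 3 and all indices at
least 2; since \<open>H\<close> raises the degree, the cubic part of \<open>R\<^sub>k\<^sub>+\<^sub>1\<close> is \<open>A\<^sub>k\<close> plus \<open>L\<close> applied to
the cubic part of \<open>R\<^sub>k\<close>. Inverting \<open>L\<close> on a cubic monomial leaves at most three
predecessors, which gives recursions for individual coefficients: those of
\<open>T\<^sub>aT\<^sub>bT\<^sub>2\<close> with \<open>a \<noteq> b\<close> vanish, that of \<open>T\<^sub>mT\<^sub>mT\<^sub>2\<close> in \<open>R\<^sub>m\<^sub>+\<^sub>1\<close> is \<open>-m(m+1)\<close>, and the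
coefficient \<open>c\<^sub>n\<close> of \<open>T\<^sub>nT\<^sub>n\<^sub>-\<^sub>1T\<^sub>3\<close> in \<open>R\<^sub>n\<^sub>+\<^sub>1\<close> satisfies
\<open>c\<^sub>n\<^sub>+\<^sub>1 = c\<^sub>n - 2\<cdot>n(n+1) - n(n+1)\<close> for \<open>n \<ge> 5\<close>, the last term coming from \<open>A\<^sub>n\<^sub>+\<^sub>1\<close>.
For \<open>n = 4\<close> the predecessor \<open>T\<^sub>3T\<^sub>3T\<^sub>4\<close> is hit twice by \<open>L\<close>, so the induction starts at
\<open>n = 5\<close> with the values \<open>-30\<close> and \<open>-120\<close> computed directly.\<close>

lemma add_mset3_eq_iff:
  "{#p, q, r#} = {#a, b, c#} \<longleftrightarrow>
     p = a \<and> q = b \<and> r = c \<or> p = a \<and> q = c \<and> r = b \<or> p = b \<and> q = a \<and> r = c \<or>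
     p = b \<and> q = c \<and> r = a \<or> p = c \<and> q = a \<and> r = b \<or> p = c \<and> q = b \<and> r = a"
  (is "?l \<longleftrightarrow> ?r")
proof
  assume ?r then show ?l by (elim disjE conjE) (simp_all add: add_mset_commute)
next
  assume l: ?l
  have "p \<in># {#a, b, c#}" using l[symmetric] by simp
  then consider "p = a" | "p = b" | "p = c" by auto
  then show ?r
  proof cases
    case 1 with l have "{#q, r#} = {#b, c#}" by simp
    with 1 show ?r by (auto simp: add_eq_conv_diff)
  next
    case 2 with l have "{#q, r#} = {#a, c#}" by (simp add: add_mset_commute[of a b])
    with 2 show ?r by (auto simp: add_eq_conv_diff)
  next
    case 3 with l have "{#q, r#} = {#a, b#}" by (metis add_mset_commute add_mset_add_mset_same_iff)
    with 3 show ?r by (auto simp: add_eq_conv_diff)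
  qed
qed

lemma linext_nonzero_imp: "linext f p m \<noteq> 0 \<Longrightarrow> \<exists>u. p u \<noteq> 0 \<and> f u m \<noteq> 0"
  unfolding linext_def by (erule sum.not_neutral_contains_not_neutral) auto

lemma finite_support_linext:
  assumes "\<And>u. finite {m. f u m \<noteq> 0}"
  shows "finite {m. linext f p m \<noteq> 0}"
proof (cases "finite {u. p u \<noteq> 0}")
  case True
  have "{m. linext f p m \<noteq> 0} \<subseteq> (\<Union>u\<in>{u. p u \<noteq> 0}. {m. f u m \<noteq> 0})"
    using linext_nonzero_imp by blast
  then show ?thesis using True assms by (meson finite_UN_I finite_subset)
next
  case False
  then show ?thesis unfolding linext_def by simp
qed

lemma Llist_nonzero_imp:
  assumes "Llist xs m \<noteq> 0"
  shows "\<exists>j<length xs. \<exists>i<j. m = mset (xs[i := xs!i + 1, j := xs!j + 1])"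
proof -
  from assms obtain j where "j < length xs"
    and "(\<Sum>i<j. single (mset (xs[i := xs!i + 1, j := xs!j + 1])) m) \<noteq> 0"
    unfolding Llist_def by (auto elim: sum.not_neutral_contains_not_neutral)
  moreover from this(2) obtain i
    where "i < j" "single (mset (xs[i := xs!i + 1, j := xs!j + 1])) m \<noteq> 0"
    by (auto elim: sum.not_neutral_contains_not_neutral)
  ultimately show ?thesis by (auto simp: single_def split: if_splits)
qed

lemma Hlist_nonzero_imp:
  assumes "Hlist xs m \<noteq> 0"
  shows "\<exists>k<length xs. \<exists>l\<in>{1..<xs!k}.
           m = mset ((1 + l) # (1 + xs!k - l) # (take k xs @ drop (Suc k) xs))"
proof -
  from assms obtain k where "k < length xs" and
    "(\<Sum>l\<in>{1..<xs!k}. of_nat (xs!k choose l) *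
        single (mset ((1 + l) # (1 + xs!k - l) # (take k xs @ drop (Suc k) xs))) m) \<noteq> (0::rat)"
    unfolding Hlist_def by (auto elim: sum.not_neutral_contains_not_neutral)
  moreover from this(2) obtain l where "l \<in> {1..<xs!k}"
    "single (mset ((1 + l) # (1 + xs!k - l) # (take k xs @ drop (Suc k) xs))) m \<noteq> 0"
    by (auto elim: sum.not_neutral_contains_not_neutral)
  ultimately show ?thesis unfolding single_def by (metis (full_types))
qed

lemma finite_support_Llist: "finite {m. Llist xs m \<noteq> 0}"
proof (rule finite_subset)
  show "{m. Llist xs m \<noteq> 0} \<subseteq> (\<lambda>(i, j). mset (xs[i := xs!i + 1, j := xs!j + 1])) `
                                ({..<length xs} \<times> {..<length xs})"
    using Llist_nonzero_imp by fastforce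
qed auto

lemma finite_support_Hlist: "finite {m. Hlist xs m \<noteq> 0}"
proof (rule finite_subset)
  show "{m. Hlist xs m \<noteq> 0} \<subseteq> (\<Union>k<length xs. (\<lambda>l. mset ((1 + l) # (1 + xs!k - l) #
                                   (take k xs @ drop (Suc k) xs))) ` {1..<xs!k})"
    using Hlist_nonzero_imp by fastforce
qed auto

lemma Apoly_nonzero_imp: "Apoly n m \<noteq> 0 \<Longrightarrow> \<exists>k\<in>{1..n-1}. m = {#1 + k, 1 + n - k, n#}"
  unfolding Apoly_def
  by (auto elim!: sum.not_neutral_contains_not_neutral simp: single_def split: if_splits)

lemma finite_support_Apoly: "finite {m. Apoly n m \<noteq> 0}"
proof (rule finite_subset)
  show "{m. Apoly n m \<noteq> 0} \<subseteq> (\<lambda>k. {#1 + k, 1 + n - k, n#}) ` {1..n-1}"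
    using Apoly_nonzero_imp by fastforce
qed auto

lemma finite_support_R: "finite {m. R k m \<noteq> 0}"
proof (induction k)
  case (Suc k)
  have "{m. R (Suc k) m \<noteq> 0} \<subseteq>
          {m. Apoly k m \<noteq> 0} \<union> {m. Lop (R k) m \<noteq> 0} \<union> {m. Hop (R k) m \<noteq> 0}"
    by auto
  moreover have "finite {m. Lop (R k) m \<noteq> 0}"
    unfolding Lop_def by (rule finite_support_linext) (rule finite_support_Llist)
  moreover have "finite {m. Hop (R k) m \<noteq> 0}"
    unfolding Hop_def by (rule finite_support_linext) (rule finite_support_Hlist)
  ultimately show ?case using finite_support_Apoly by (meson finite_Un finite_subset)
qed simp

definition admissible :: "mono \<Rightarrow> bool" where
  "admissible m \<longleftrightarrow> 3 \<le> size m \<and> (\<forall>x\<in>#m. 2 \<le> x)"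

lemma length_sorted_list_of_multiset: "length (sorted_list_of_multiset u) = size u"
  by (metis mset_sorted_list_of_multiset size_mset)

lemma size_Llist: "Llist (sorted_list_of_multiset u) m \<noteq> 0 \<Longrightarrow> size m = size u"
  by (auto dest!: Llist_nonzero_imp simp: length_sorted_list_of_multiset)

lemma size_Hlist: "Hlist (sorted_list_of_multiset u) m \<noteq> 0 \<Longrightarrow> size m = size u + 1"
  by (auto dest!: Hlist_nonzero_imp simp: length_sorted_list_of_multiset)

lemma admissible_Llist:
  assumes "Llist (sorted_list_of_multiset u) m \<noteq> 0" "admissible u"
  shows "admissible m"
proof -
  let ?xs = "sorted_list_of_multiset u"
  from Llist_nonzero_imp[OF assms(1)] obtain j i where "j < length ?xs" "i < j"
    and m: "m = mset (?xs[i := ?xs!i + 1, j := ?xs!j + 1])" by blast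
  then have "?xs!i \<in># u" "?xs!j \<in># u"
    by (metis nth_mem order.strict_trans set_sorted_list_of_multiset)+
  moreover have "set (?xs[i := ?xs!i + 1, j := ?xs!j + 1]) \<subseteq>
                   insert (?xs!j + 1) (insert (?xs!i + 1) (set ?xs))"
    by (meson insert_mono order_trans set_update_subset_insert)
  ultimately have "\<forall>x\<in>#m. 2 \<le> x"
    using assms(2) unfolding admissible_def m by fastforce
  then show ?thesis using size_Llist[OF assms(1)] assms(2) by (simp add: admissible_def)
qed

lemma admissible_Hlist:
  assumes "Hlist (sorted_list_of_multiset u) m \<noteq> 0" "admissible u"
  shows "admissible m"
proof -
  let ?xs = "sorted_list_of_multiset u"
  from Hlist_nonzero_imp[OF assms(1)] obtain k l where "l \<in> {1..<?xs!k}" and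
    m: "m = mset ((1 + l) # (1 + ?xs!k - l) # (take k ?xs @ drop (Suc k) ?xs))" by blast
  moreover have "set (take k ?xs @ drop (Suc k) ?xs) \<subseteq> set ?xs"
    by (auto dest: in_set_takeD in_set_dropD)
  ultimately have "\<forall>x\<in>#m. 2 \<le> x" using assms(2) unfolding admissible_def by auto
  then show ?thesis using size_Hlist[OF assms(1)] assms(2) by (simp add: admissible_def)
qed

lemma admissible_R: "R k m \<noteq> 0 \<Longrightarrow> admissible m"
proof (induction k arbitrary: m)
  case (Suc k)
  then have "2 \<le> k" and "Apoly k m + Lop (R k) m + Hop (R k) m \<noteq> 0"
    by (auto split: if_splits)
  then consider "Apoly k m \<noteq> 0" | "Lop (R k) m \<noteq> 0" | "Hop (R k) m \<noteq> 0" by fastforce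
  then show ?case
  proof cases
    case 1
    then show ?thesis using \<open>2 \<le> k\<close> by (auto dest!: Apoly_nonzero_imp simp: admissible_def)
  next
    case 2
    then show ?thesis
      unfolding Lop_def using linext_nonzero_imp admissible_Llist Suc.IH by blast
  next
    case 3
    then show ?thesis
      unfolding Hop_def using linext_nonzero_imp admissible_Hlist Suc.IH by blast
  qed
qed simp

lemma Hop_R_size3: "size m = 3 \<Longrightarrow> Hop (R k) m = 0"
  unfolding Hop_def linext_def
  by (rule sum.neutral) (use admissible_R size_Hlist in \<open>fastforce simp: admissible_def\<close>)

lemma R_Suc_add_mset3:
  "2 \<le> k \<Longrightarrow> R (Suc k) {#a, b, c#} = Apoly k {#a, b, c#} + Lop (R k) {#a, b, c#}"
  by (simp add: Hop_R_size3)

lemma Llist_3: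
  "Llist [x, y, z] m = single {#x+1, y+1, z#} m + single {#x+1, y, z+1#} m + single {#x, y+1, z+1#} m"
  unfolding Llist_def by (simp add: numeral_3_eq_3 lessThan_Suc add_mset_commute)

lemma sorted_list_of_multiset_size3:
  assumes "size u = 3"
  obtains x y z where "sorted_list_of_multiset u = [x, y, z]" "u = {#x, y, z#}"
proof -
  have "length (sorted_list_of_multiset u) = 3"
    using assms by (simp add: length_sorted_list_of_multiset)
  then obtain x y z where xs: "sorted_list_of_multiset u = [x, y, z]"
    by (auto simp: numeral_3_eq_3 length_Suc_conv)
  moreover have "u = {#x, y, z#}"
    by (metis xs mset_sorted_list_of_multiset mset.simps add_mset_commute union_code)
  ultimately show thesis by (rule that)
qed

lemma Llist_size3:
  "Llist (sorted_list_of_multiset {#x, y, z#}) m =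
     single {#x+1, y+1, z#} m + single {#x+1, y, z+1#} m + single {#x, y+1, z+1#} m"
proof -
  obtain x' y' z' where sorted: "sorted_list_of_multiset {#x, y, z#} = [x', y', z']"
    and "{#x, y, z#} = {#x', y', z'#}"
    using sorted_list_of_multiset_size3[of "{#x, y, z#}"] by auto
  then show ?thesis
    unfolding sorted Llist_3 add_mset3_eq_iff
    by (elim disjE conjE) (simp_all add: add_mset_commute algebra_simps)
qed

lemma Llist_size3_nonzero_imp:
  assumes "Llist (sorted_list_of_multiset u) {#a, b, c#} \<noteq> 0"
  shows "u \<in> {{#a - 1, b - 1, c#}, {#a - 1, b, c - 1#}, {#a, b - 1, c - 1#}}"
proof -
  have "size u = 3" using size_Llist[OF assms] by simp
  then obtain x y z where u: "u = {#x, y, z#}"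
    by (rule sorted_list_of_multiset_size3)
  have "{#a, b, c#} = {#x+1, y+1, z#} \<or> {#a, b, c#} = {#x+1, y, z+1#} \<or>
          {#a, b, c#} = {#x, y+1, z+1#}"
    using assms unfolding u Llist_size3 single_def by (auto split: if_splits)
  then show ?thesis
    unfolding u add_mset3_eq_iff by (elim disjE conjE) (simp_all add: add_mset_commute)
qed

lemma Lop_eq_sum:
  assumes "finite {u. p u \<noteq> 0}" "finite C"
    and "\<And>u. p u \<noteq> 0 \<Longrightarrow> Llist (sorted_list_of_multiset u) m \<noteq> 0 \<Longrightarrow> u \<in> C"
  shows "Lop p m = (\<Sum>u\<in>C. p u * Llist (sorted_list_of_multiset u) m)"
proof -
  let ?g = "\<lambda>u. p u * Llist (sorted_list_of_multiset u) m"
  have "Lop p m = sum ?g {u. p u \<noteq> 0}" unfolding Lop_def linext_def by simp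
  also have "\<dots> = sum ?g ({u. p u \<noteq> 0} \<union> C)"
    by (rule sum.mono_neutral_left) (use assms in auto)
  also have "\<dots> = sum ?g C"
    by (rule sum.mono_neutral_right) (use assms in auto)
  finally show ?thesis .
qed

lemma Lop_R_size3:
  assumes "finite C"
    and "\<And>u. u \<in> {{#a - 1, b - 1, c#}, {#a - 1, b, c - 1#}, {#a, b - 1, c - 1#}} \<Longrightarrow>
               admissible u \<Longrightarrow> u \<in> C"
  shows "Lop (R k) {#a, b, c#} = (\<Sum>u\<in>C. R k u * Llist (sorted_list_of_multiset u) {#a, b, c#})"
proof (rule Lop_eq_sum[OF finite_support_R assms(1)])
  fix u assume "R k u \<noteq> 0" "Llist (sorted_list_of_multiset u) {#a, b, c#} \<noteq> 0"
  then show "u \<in> C" by (intro assms(2) Llist_size3_nonzero_imp admissible_R)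
qed

lemma Apoly_eq_sum:
  assumes "S \<subseteq> {1..k-1}" "\<And>j. j \<in> {1..k-1} - S \<Longrightarrow> {#1 + j, 1 + k - j, k#} \<noteq> m"
  shows "Apoly k m = - (\<Sum>j\<in>S. of_nat (k choose j) * single {#1 + j, 1 + k - j, k#} m)"
proof -
  have "single {#1 + j, 1 + k - j, k#} m = 0" if "j \<in> {1..k-1} - S" for j
    using assms(2)[OF that] by (simp add: single_def)
  then show ?thesis
    unfolding Apoly_def by (subst sum.mono_neutral_right[OF _ assms(1)]) auto
qed

lemma R_ab2_eq_0: "a \<noteq> b \<Longrightarrow> R k {#a, b, 2#} = 0"
proof (induction k arbitrary: a b)
  case (Suc k)
  show ?case
  proof (cases "2 \<le> k")
    case True
    have "Apoly k {#a, b, 2#} = 0"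
      by (rule trans[OF Apoly_eq_sum[of "{}"]]) (use Suc.prems in \<open>auto simp: add_mset3_eq_iff\<close>)
    moreover have "R k {#a - 1, b - 1, 2#} = 0"
    proof (cases "a - 1 = b - 1")
      case True
      with Suc.prems have "\<not> admissible {#a - 1, b - 1, 2#}" by (auto simp: admissible_def)
      then show ?thesis using admissible_R by blast
    qed (rule Suc.IH)
    moreover have "Lop (R k) {#a, b, 2#} =
        R k {#a - 1, b - 1, 2#} * Llist (sorted_list_of_multiset {#a - 1, b - 1, 2#}) {#a, b, 2#}"
      by (subst Lop_R_size3[where C = "{{#a - 1, b - 1, 2#}}"]) (auto simp: admissible_def)
    ultimately show ?thesis using R_Suc_add_mset3[OF True, of a b 2] by (simp del: R.simps)
  qed simp
qed simp

lemma R_3_222: "R 3 {#2, 2, 2#} = -2"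
proof -
  have "Lop (R 2) m = 0" for m by (simp add: numeral_2_eq_2 Lop_def linext_def)
  then show ?thesis
    using R_Suc_add_mset3[of 2 2 2 2] by (simp add: eval_nat_numeral Apoly_def single_def)
qed

lemma Apoly_m_m_2:
  assumes "3 \<le> m" shows "Apoly m {#m, m, 2#} = - of_nat (2 * m)"
proof -
  have "Apoly m {#m, m, 2#} =
          - (\<Sum>j\<in>{1, m - 1}. of_nat (m choose j) * single {#1 + j, 1 + m - j, m#} {#m, m, 2#})"
    by (rule Apoly_eq_sum) (use assms in \<open>auto simp: add_mset3_eq_iff\<close>)
  also have "\<dots> = - (of_nat m + of_nat m)"
    using assms binomial_symmetric[of 1 m] by (simp add: single_def add_mset3_eq_iff)
  finally show ?thesis by simp
qed

lemma R_Suc_m_m_2: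
  assumes "3 \<le> m" shows "R (Suc m) {#m, m, 2#} = - of_nat (m * (m + 1))"
  using assms
proof (induction m rule: nat_induct_at_least)
  case base
  have "Lop (R 3) {#3, 3, 2#} =
          R 3 {#2, 2, 2#} * Llist (sorted_list_of_multiset {#2, 2, 2#}) {#3, 3, 2#}"
    by (subst Lop_R_size3[where C = "{{#2, 2, 2#}}"]) (auto simp: admissible_def)
  also have "\<dots> = -6"
    unfolding R_3_222 Llist_size3 by (simp add: single_def add_mset3_eq_iff)
  finally show ?case using R_Suc_add_mset3[of 3] Apoly_m_m_2[of 3] by simp
next
  case (Suc m)
  let ?M = "{#Suc m, Suc m, 2#}"
  have "Lop (R (Suc m)) ?M =
          R (Suc m) {#m, m, 2#} * Llist (sorted_list_of_multiset {#m, m, 2#}) ?M"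
    by (subst Lop_R_size3[where C = "{{#m, m, 2#}}"]) (auto simp: admissible_def)
  also have "\<dots> = - of_nat (m * (m + 1))"
    unfolding Suc.IH Llist_size3 using Suc.hyps
    by (simp add: single_def add_mset3_eq_iff add_eq_conv_diff)
  finally have "R (Suc (Suc m)) ?M = - of_nat (2 * Suc m) - of_nat (m * (m + 1))"
    using R_Suc_add_mset3[of "Suc m"] Apoly_m_m_2[of "Suc m"] Suc.hyps by (simp del: R.simps)
  then show ?case by (simp add: algebra_simps)
qed

lemma R_5_433: "R 5 {#4, 3, 3#} = -30"
proof -
  let ?M = "{#4, 3, 3#} :: mono"
  have "Apoly 4 ?M = - (\<Sum>j\<in>{2}. of_nat (4 choose j) * single {#1 + j, 1 + 4 - j, 4#} ?M)"
    by (rule Apoly_eq_sum) (auto simp: add_mset3_eq_iff)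
  then have A: "Apoly 4 ?M = -6" by (simp add: single_def add_mset3_eq_iff choose_two)
  have "Lop (R 4) ?M =
          (\<Sum>u\<in>{{#3, 3, 2#}, {#4, 2, 2#}}. R 4 u * Llist (sorted_list_of_multiset u) ?M)"
    by (rule Lop_R_size3) (auto simp: admissible_def add_mset3_eq_iff)
  also have "\<dots> = -24"
    using R_Suc_m_m_2[of 3] R_ab2_eq_0[of 4 2 4]
    by (simp add: Llist_3 single_def add_mset3_eq_iff)
  finally show ?thesis using A R_Suc_add_mset3[of 4] by (simp del: R.simps)
qed

lemma R_6_543: "R 6 {#5, 4, 3#} = -120"
proof -
  let ?M = "{#5, 4, 3#} :: mono"
  have "Apoly 5 ?M = - (\<Sum>j\<in>{2, 3}. of_nat (5 choose j) * single {#1 + j, 1 + 5 - j, 5#} ?M)"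
    by (rule Apoly_eq_sum) (auto simp: add_mset3_eq_iff)
  then have A: "Apoly 5 ?M = -20"
    using binomial_symmetric[of 2 5] by (simp add: single_def add_mset3_eq_iff choose_two)
  have "Lop (R 5) ?M = (\<Sum>u\<in>{{#4, 3, 3#}, {#4, 4, 2#}, {#5, 3, 2#}}.
                          R 5 u * Llist (sorted_list_of_multiset u) ?M)"
    by (rule Lop_R_size3) (auto simp: admissible_def add_mset3_eq_iff)
  also have "\<dots> = -100"
    using R_5_433 R_Suc_m_m_2[of 4] R_ab2_eq_0[of 5 3 5]
    by (simp add: Llist_3 single_def add_mset3_eq_iff add_eq_conv_diff)
  finally show ?thesis using A R_Suc_add_mset3[of 5] by (simp del: R.simps)
qed

lemma Apoly_Suc_m_m_3:
  assumes "5 \<le> m" shows "Apoly (Suc m) {#Suc m, m, 3#} = - of_nat (Suc m * m)"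
proof -
  have "Apoly (Suc m) {#Suc m, m, 3#} = - (\<Sum>j\<in>{2, m - 1}.
          of_nat (Suc m choose j) * single {#1 + j, 1 + Suc m - j, Suc m#} {#Suc m, m, 3#})"
    by (rule Apoly_eq_sum) (use assms in \<open>auto simp: add_mset3_eq_iff\<close>)
  also have "\<dots> = - of_nat (2 * (Suc m choose 2))"
    using assms binomial_symmetric[of 2 "Suc m"] by (simp add: single_def add_mset3_eq_iff)
  also have "\<dots> = - of_nat (Suc m * m)"
    using Suc_times_binomial[of 1 m] by (metis Suc_1 choose_one)
  finally show ?thesis .
qed

lemma R_Suc_n_pred_3:
  assumes "5 \<le> n" shows "R (Suc n) {#n, n - 1, 3#} = - of_nat ((n - 1) * n * (n + 1))"
  using assms
proof (induction n rule: nat_induct_at_least)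
  case base
  then show ?case using R_6_543 by simp
next
  case (Suc m)
  let ?M = "{#Suc m, m, 3#}"
  have "Lop (R (Suc m)) ?M = (\<Sum>u\<in>{{#m, m - 1, 3#}, {#m, m, 2#}, {#Suc m, m - 1, 2#}}.
                                  R (Suc m) u * Llist (sorted_list_of_multiset u) ?M)"
    by (rule Lop_R_size3) (auto simp: admissible_def add_mset3_eq_iff)
  also have "\<dots> = - of_nat ((m - 1) * m * (m + 1)) - 2 * of_nat (m * (m + 1))"
    using Suc.IH R_Suc_m_m_2[of m] R_ab2_eq_0[of "Suc m" "m - 1" "Suc m"] Suc.hyps
    by (auto simp: Llist_3 single_def add_mset3_eq_iff add_eq_conv_diff simp del: R.simps)
  finally have "R (Suc (Suc m)) ?M =
      - of_nat (Suc m * m) - of_nat ((m - 1) * m * (m + 1)) - 2 * of_nat (m * (m + 1))"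
    using R_Suc_add_mset3[of "Suc m"] Apoly_Suc_m_m_3 Suc.hyps by (simp del: R.simps)
  also have "\<dots> = - of_nat (m * Suc m * (Suc m + 1))"
    using Suc.hyps by (cases m) (simp_all add: algebra_simps)
  finally show ?case by simp
qed

theorem mainTheorem14:
  fixes n :: nat
  assumes "n \<ge> 5"
  shows "coef (n + 1) {#n, n - 1, 3#} = - of_nat ((n - 1) * n * (n + 1))"
  unfolding coef_def using R_Suc_n_pred_3[OF assms] by simp

end
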